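(* Let $\alpha\in(0,1/2]$, let $X_1,X_2$ be i.i.d. Gamma$(\alpha)$ random variables, $Y_i=X_i-\alpha$, and let $d_1,d_2\geq0$ with $d_1\neq d_2$. Let $f_U$ be the density of $U=d_1Y_1+d_2Y_2$ and $f_V$ the density of $V=\sqrt{\tfrac12(d_1^2+d_2^2)}(Y_1+Y_2)$. Then there exist points $x_0<x_1<x_2$ such that $f_V-f_U$ is strictly positive on $\big(-\alpha\sqrt{2(d_1^2+d_2^2)},x_0\big)\cup(x_1,x_2)$ and strictly negative on $(x_0,x_1)\cup(x_2,\infty)$. Moreover, $x_0=-\alpha(d_1+d_2)$.
   Context: Gamma$(\alpha)$ denotes the distribution with density $\Gamma(\alpha)^{-1}x^{\alpha-1}e^{-x}$ on $(0,\infty)$. *)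

theory Defs
  imports "HOL-Analysis.Analysis"
begin

definition gamma_dens :: "real \<Rightarrow> real \<Rightarrow> real" where
  "gamma_dens a x = (if 0 < x then x powr (a - 1) * exp (- x) / Gamma a else 0)"

definition scaled_centered_dens :: "real \<Rightarrow> real \<Rightarrow> real \<Rightarrow> real" where
  "scaled_centered_dens a d x = gamma_dens a (x / d + a) / d"

definition conv_dens :: "(real \<Rightarrow> real) \<Rightarrow> (real \<Rightarrow> real) \<Rightarrow> real \<Rightarrow> real" where
  "conv_dens f g x = (LINT t|lborel. f t * g (x - t))"

definition lincomb_dens :: "real \<Rightarrow> real \<Rightarrow> real \<Rightarrow> real \<Rightarrow> real" where
  "lincomb_dens a d1 d2 =
     (if d1 = 0 then scaled_centered_dens a d2
      else if d2 = 0 then scaled_centered_dens a d1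
      else conv_dens (scaled_centered_dens a d1) (scaled_centered_dens a d2))"

end

theory Submission
  imports Defs "HOL-Real_Asymp.Real_Asymp"
begin

(* Put s = x + alpha (d1 + d2), the value of d1 X1 + d2 X2, and delta = alpha (2 c - d1 - d2) > 0.
   In s, fV is a scaled Gamma(2 alpha) density evaluated at s + delta, while fU(s) = s^(2 alpha - 1) K(s),
   where K is, up to a constant, the Laplace transform of W / d1 + (1 - W) / d2 with W ~ Beta(alpha, alpha),
   hence log-convex (if d1 = 0, fU is itself a scaled Gamma(alpha) density).  For alpha <= 1/2 this makes
   ln fU - ln fV convex in s > 0.  Comparing exponential rates (d1 d2 <= c^2 and c < max d1 d2) shows
   that it is positive near 0 and near infinity, and it is negative somewhere because U and V both have
   mean 0 while only V charges (-2 alpha c, x0).  A convex function with this sign pattern changes sign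
   exactly twice; below x0 we have fU = 0 < fV. *)

section \<open>Gamma densities\<close>

lemma gamma_dens_measurable [measurable]: "gamma_dens a \<in> borel_measurable borel"
  unfolding gamma_dens_def by measurable

lemma scaled_centered_dens_measurable [measurable]:
  "scaled_centered_dens a d \<in> borel_measurable borel"
  unfolding scaled_centered_dens_def by measurable

lemma gamma_dens_nonneg: "0 < a \<Longrightarrow> 0 \<le> gamma_dens a x"
  unfolding gamma_dens_def by auto

lemma gamma_dens_pos_iff: "0 < a \<Longrightarrow> 0 < gamma_dens a x \<longleftrightarrow> 0 < x"
  unfolding gamma_dens_def by auto

lemma scaled_centered_dens_nonneg: "0 < a \<Longrightarrow> 0 < d \<Longrightarrow> 0 \<le> scaled_centered_dens a d x"
  unfolding scaled_centered_dens_def by (simp add: gamma_dens_nonneg)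

lemma scaled_centered_dens_pos_iff:
  "0 < a \<Longrightarrow> 0 < d \<Longrightarrow> 0 < scaled_centered_dens a d x \<longleftrightarrow> - (a * d) < x"
  unfolding scaled_centered_dens_def by (auto simp: gamma_dens_pos_iff field_simps)

lemma has_integral_affine_times_gamma_dens:
  assumes "0 < a"
  shows "((\<lambda>u. (p * u + q) * gamma_dens a u) has_integral (p * a + q)) UNIV"
proof -
  have Gamma_succ: "Gamma (a + 1) = a * Gamma a"
    by (rule Gamma_plus1) (use assms nonpos_Ints_nonpos in force)
  have "((\<lambda>t. (p * (t powr ((a + 1) - 1) / exp t) + q * (t powr (a - 1) / exp t)) / Gamma a)
      has_integral (p * Gamma (a + 1) + q * Gamma a) / Gamma a) {0..}"
    using assms by (intro has_integral_divide has_integral_add has_integral_mult_right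
        Gamma_integral_real) auto
  also have "(p * Gamma (a + 1) + q * Gamma a) / Gamma a = p * a + q"
    unfolding Gamma_succ using Gamma_real_pos[OF assms] by (simp add: divide_simps algebra_simps)
  finally have "((\<lambda>u. (p * u + q) * gamma_dens a u) has_integral (p * a + q)) {0..}"
    by (rule has_integral_spike_finite[where S = "{0}", rotated -1])
       (auto simp: gamma_dens_def powr_mult_base exp_minus field_simps)
  then show ?thesis
    by (rule has_integral_on_superset) (auto simp: gamma_dens_def)
qed

lemma nn_integral_affine_times_gamma_dens:
  assumes "0 < a" "0 \<le> p" "0 \<le> q"
  shows "(\<integral>\<^sup>+u. ennreal ((p * u + q) * gamma_dens a u) \<partial>lborel) = ennreal (p * a + q)"
proof (rule nn_integral_has_integral_lborel)
  show "0 \<le> (p * u + q) * gamma_dens a u" for u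
    using assms by (cases "0 < u") (auto simp: gamma_dens_def)
qed (use assms has_integral_affine_times_gamma_dens in auto)

lemma nn_integral_scaled_centered_dens:
  assumes "0 < d" and [measurable]: "g \<in> borel_measurable borel"
  shows "(\<integral>\<^sup>+y. ennreal (g y * scaled_centered_dens a d y) \<partial>lborel)
       = (\<integral>\<^sup>+u. ennreal (g (d * (u - a)) * gamma_dens a u) \<partial>lborel)"
proof -
  have "(\<integral>\<^sup>+y. ennreal (g y * scaled_centered_dens a d y) \<partial>lborel)
      = ennreal d * (\<integral>\<^sup>+u. ennreal (g (-a*d + d*u) * scaled_centered_dens a d (-a*d + d*u)) \<partial>lborel)"
    using assms nn_integral_real_affine[of "\<lambda>y. ennreal (g y * scaled_centered_dens a d y)" d "-a*d"]
    by simp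
  also have "\<dots> = (\<integral>\<^sup>+u. ennreal d * ennreal (g (-a*d + d*u) * scaled_centered_dens a d (-a*d + d*u)) \<partial>lborel)"
    by (rule nn_integral_cmult[symmetric]) measurable
  also have "\<dots> = (\<integral>\<^sup>+u. ennreal (g (d * (u - a)) * gamma_dens a u) \<partial>lborel)"
  proof (intro nn_integral_cong)
    fix u :: real
    have "(-a*d + d*u) / d + a = u" "-a*d + d*u = d * (u - a)"
      using assms by (simp_all add: field_simps)
    then show "ennreal d * ennreal (g (-a*d + d*u) * scaled_centered_dens a d (-a*d + d*u))
        = ennreal (g (d * (u - a)) * gamma_dens a u)"
      using assms by (simp add: ennreal_mult'[symmetric] scaled_centered_dens_def)
  qed
  finally show ?thesis .
qed

lemma nn_integral_shifted_scaled_centered_dens: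
  assumes "0 < a" "0 < d" "a * d \<le> b"
  shows "(\<integral>\<^sup>+y. ennreal ((y + b) * scaled_centered_dens a d y) \<partial>lborel) = ennreal b"
proof -
  have "(\<integral>\<^sup>+y. ennreal ((y + b) * scaled_centered_dens a d y) \<partial>lborel)
      = (\<integral>\<^sup>+u. ennreal ((d * (u - a) + b) * gamma_dens a u) \<partial>lborel)"
    using assms by (simp add: nn_integral_scaled_centered_dens)
  also have "\<dots> = (\<integral>\<^sup>+u. ennreal ((d * u + (b - a * d)) * gamma_dens a u) \<partial>lborel)"
    by (intro nn_integral_cong) (simp add: algebra_simps)
  also have "\<dots> = ennreal b"
    using assms by (simp add: nn_integral_affine_times_gamma_dens)
  finally show ?thesis .
qed

section \<open>Log-convexity of a Beta--Laplace transform\<close>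

lemma log_convex_laplace_integral:
  fixes \<phi> \<rho> L :: "real \<Rightarrow> real"
  assumes "convex S"
    and L: "\<And>s. s \<in> S \<Longrightarrow> ((\<lambda>w. \<phi> w * exp (- (s * \<rho> w))) has_integral L s) A"
    and \<phi>: "\<And>w. w \<in> A \<Longrightarrow> 0 \<le> \<phi> w"
    and L_pos: "\<And>s. s \<in> S \<Longrightarrow> 0 < L s"
  shows "convex_on S (\<lambda>s. ln (L s))"
proof (rule convex_onI[OF _ assms(1)])
  fix t x y :: real
  assume t: "0 < t" "t < 1" and xy: "x \<in> S" "y \<in> S"
  define s where "s = (1 - t) * x + t * y"
  have s: "s \<in> S"
    using convexD[OF assms(1) xy, of "1 - t" t] t by (simp add: s_def)
  define m where "m = (1 - t) * ln (L x) + t * ln (L y)"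
  have L_exp: "exp (ln (L x)) = L x" "exp (ln (L y)) = L y"
    using L_pos xy by auto
  \<comment> \<open>Hoelder's inequality, pointwise: convexity of \<open>exp\<close> applied to the log-normalized integrands.\<close>
  have pointwise: "\<phi> w * exp (- (s * \<rho> w))
      \<le> exp m * ((1 - t) * (\<phi> w * exp (- (x * \<rho> w)) / L x) + t * (\<phi> w * exp (- (y * \<rho> w)) / L y))"
    if "w \<in> A" for w
  proof -
    define u where "u = - (x * \<rho> w) - ln (L x)"
    define v where "v = - (y * \<rho> w) - ln (L y)"
    have "exp ((1 - t) * u + t * v) \<le> (1 - t) * exp u + t * exp v"
      using convex_onD[OF exp_convex, of t u v] t by simp
    moreover have "exp m * exp ((1 - t) * u + t * v) = exp (- (s * \<rho> w))"
      by (simp add: exp_add[symmetric] u_def v_def s_def m_def algebra_simps)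
    moreover have "exp u = exp (- (x * \<rho> w)) / L x" "exp v = exp (- (y * \<rho> w)) / L y"
      by (simp_all add: u_def v_def exp_diff L_exp)
    ultimately have "exp (- (s * \<rho> w))
        \<le> exp m * ((1 - t) * (exp (- (x * \<rho> w)) / L x) + t * (exp (- (y * \<rho> w)) / L y))"
      by (metis exp_gt_zero mult_le_cancel_left_pos)
    then show ?thesis
      using \<phi>[OF that] by (auto dest: mult_left_mono[of _ _ "\<phi> w"] simp: algebra_simps)
  qed
  have "((\<lambda>w. exp m * ((1 - t) * (\<phi> w * exp (- (x * \<rho> w)) / L x) + t * (\<phi> w * exp (- (y * \<rho> w)) / L y)))
      has_integral exp m * ((1 - t) * (L x / L x) + t * (L y / L y))) A"
    using xy by (intro has_integral_mult_right has_integral_add has_integral_divide L)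
  then have "L s \<le> exp m * ((1 - t) * (L x / L x) + t * (L y / L y))"
    by (rule has_integral_le[OF L[OF s]]) (use pointwise in auto)
  also have "\<dots> = exp m"
    using L_pos[OF xy(1)] L_pos[OF xy(2)] by simp
  finally have "ln (L s) \<le> m"
    using L_pos[OF s] by (metis exp_gt_zero ln_exp ln_le_cancel_iff)
  then show "ln (L ((1 - t) *\<^sub>R x + t *\<^sub>R y)) \<le> (1 - t) * ln (L x) + t * ln (L y)"
    by (simp add: s_def m_def)
qed

definition beta_weight :: "real \<Rightarrow> real \<Rightarrow> real" where
  "beta_weight a w = w powr (a - 1) * (1 - w) powr (a - 1)"

definition beta_laplace :: "real \<Rightarrow> real \<Rightarrow> real \<Rightarrow> real \<Rightarrow> real" where
  "beta_laplace a d1 d2 s =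
     integral {0<..<1} (\<lambda>w. beta_weight a w * exp (- (s * (w / d1 + (1 - w) / d2))))"

lemma beta_weight_nonneg: "0 \<le> beta_weight a w"
  by (simp add: beta_weight_def)

lemma has_integral_beta_weight: "0 < a \<Longrightarrow> (beta_weight a has_integral Beta a a) {0<..<1}"
  unfolding beta_weight_def using has_integral_Beta_real[of a a]
  by (simp add: has_integral_Icc_iff_Ioo)

lemma has_integral_beta_laplace:
  assumes "0 < a" "0 < d1" "0 < d2" "0 \<le> s"
  shows "((\<lambda>w. beta_weight a w * exp (- (s * (w / d1 + (1 - w) / d2))))
           has_integral beta_laplace a d1 d2 s) {0<..<1}"
proof -
  have "(\<lambda>w. beta_weight a w * exp (- (s * (w / d1 + (1 - w) / d2)))) integrable_on {0<..<1}"
  proof (rule measurable_bounded_by_integrable_imp_integrable_real)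
    show "(\<lambda>w. beta_weight a w * exp (- (s * (w / d1 + (1 - w) / d2))))
        \<in> borel_measurable (lebesgue_on {0<..<1})"
      using assms by (intro continuous_imp_measurable_on_sets_lebesgue)
        (auto simp: beta_weight_def intro!: continuous_intros)
    show "beta_weight a integrable_on {0<..<1}"
      using has_integral_beta_weight[OF assms(1)] by blast
    show "\<bar>beta_weight a w * exp (- (s * (w / d1 + (1 - w) / d2)))\<bar> \<le> beta_weight a w"
      if "w \<in> {0<..<1}" for w
      using that assms beta_weight_nonneg[of a w]
      by (simp add: abs_mult mult_left_le)
  qed auto
  then show ?thesis
    unfolding beta_laplace_def by (simp add: integrable_integral)
qed

lemma beta_laplace_ge_exp:
  assumes "0 < a" "0 < d1" "0 < d2" "0 \<le> s"
  shows "exp (- (s * (1 / d1 + 1 / d2))) * Beta a a \<le> beta_laplace a d1 d2 s"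
proof (rule has_integral_le[OF _ has_integral_beta_laplace[OF assms]])
  show "((\<lambda>w. beta_weight a w * exp (- (s * (1 / d1 + 1 / d2))))
      has_integral exp (- (s * (1 / d1 + 1 / d2))) * Beta a a) {0<..<1}"
    using has_integral_mult_left[OF has_integral_beta_weight[OF assms(1)],
        of "exp (- (s * (1 / d1 + 1 / d2)))"]
    by (simp add: mult.commute)
  fix w :: real assume w: "w \<in> {0<..<1}"
  then have "w / d1 + (1 - w) / d2 \<le> 1 / d1 + 1 / d2"
    using assms by (intro add_mono divide_right_mono) auto
  then show "beta_weight a w * exp (- (s * (1 / d1 + 1 / d2)))
      \<le> beta_weight a w * exp (- (s * (w / d1 + (1 - w) / d2)))"
    using assms by (intro mult_left_mono beta_weight_nonneg) (simp add: mult_left_mono)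
qed

lemma beta_laplace_pos:
  assumes "0 < a" "0 < d1" "0 < d2" "0 \<le> s"
  shows "0 < beta_laplace a d1 d2 s"
  using beta_laplace_ge_exp[OF assms] assms(1)
  by (smt (verit) Beta_def Gamma_real_pos exp_gt_zero mult_pos_pos divide_pos_pos)

text \<open>Only the weight near \<open>w = 0\<close> is used: there the rate \<open>w / d1 + (1 - w) / d2\<close> is close to
  \<open>1 / d2\<close>, the slowest exponential decay rate of \<open>beta_laplace\<close>.\<close>

lemma beta_laplace_ge_tail:
  assumes "0 < a" "a \<le> 1" "0 < d1" "d1 \<le> d2" "0 \<le> s" "0 < \<eta>" "\<eta> < 1"
  shows "\<eta> powr a / a * exp (- (s * (1 / d2 + \<eta> * (1 / d1 - 1 / d2)))) \<le> beta_laplace a d1 d2 s"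
proof -
  have d2: "0 < d2" using assms by simp
  define r where "r = 1 / d2 + \<eta> * (1 / d1 - 1 / d2)"
  let ?F = "\<lambda>w. beta_weight a w * exp (- (s * (w / d1 + (1 - w) / d2)))"
  have F: "(?F has_integral beta_laplace a d1 d2 s) {0..1}"
    using has_integral_beta_laplace[OF assms(1,3) d2 assms(5)] by (simp add: has_integral_Icc_iff_Ioo)
  have F_\<eta>: "(?F has_integral integral {0..\<eta>} ?F) {0..\<eta>}"
    using integrable_on_subinterval[OF has_integral_integrable[OF F]] assms by (simp add: integrable_integral)
  have "((\<lambda>w. w powr (a - 1) * exp (- (s * r))) has_integral \<eta> powr a / a * exp (- (s * r))) {0..\<eta>}"
    using has_integral_mult_left[OF has_integral_powr_from_0[of "a - 1" \<eta>]] assms by simp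
  then have "\<eta> powr a / a * exp (- (s * r)) \<le> integral {0..\<eta>} ?F"
  proof (rule has_integral_le[OF _ F_\<eta>])
    fix w assume w: "w \<in> {0..\<eta>}"
    show "w powr (a - 1) * exp (- (s * r)) \<le> ?F w"
    proof (cases "w = 0")
      case False
      then have w: "0 < w" "w \<le> \<eta>" using w by auto
      have "1 powr (a - 1) \<le> (1 - w) powr (a - 1)"
        by (rule powr_mono2') (use assms w in auto)
      then have "w powr (a - 1) \<le> beta_weight a w"
        unfolding beta_weight_def using mult_left_mono[of 1 "(1 - w) powr (a - 1)" "w powr (a - 1)"] by simp
      moreover have "w / d1 + (1 - w) / d2 \<le> r"
      proof -
        have "w / d1 + (1 - w) / d2 = 1 / d2 + w * (1 / d1 - 1 / d2)"
          using assms d2 by (simp add: field_simps)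
        also have "\<dots> \<le> r"
          unfolding r_def using w assms by (intro add_left_mono mult_right_mono) (auto simp: frac_le)
        finally show ?thesis .
      qed
      then have "exp (- (s * r)) \<le> exp (- (s * (w / d1 + (1 - w) / d2)))"
        using assms by (simp add: mult_left_mono)
      ultimately show ?thesis by (intro mult_mono) (auto simp: beta_weight_nonneg)
    qed (simp add: beta_weight_def)
  qed
  also have "integral {0..\<eta>} ?F \<le> beta_laplace a d1 d2 s"
    by (rule has_integral_subset_le[OF _ F_\<eta> F])
       (use assms in \<open>auto intro!: mult_nonneg_nonneg beta_weight_nonneg\<close>)
  finally show ?thesis by (simp add: r_def)
qed

lemma beta_laplace_same_scale:
  assumes "0 < a" "0 < c"
  shows "beta_laplace a c c s = exp (- (s / c)) * Beta a a"
proof -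
  have "w / c + (1 - w) / c = 1 / c" for w
    using assms by (simp add: field_simps)
  then have "((\<lambda>w. beta_weight a w * exp (- (s * (w / c + (1 - w) / c))))
      has_integral Beta a a * exp (- (s / c))) {0<..<1}"
    using has_integral_mult_left[OF has_integral_beta_weight[OF assms(1)]] by simp
  then show ?thesis
    unfolding beta_laplace_def by (simp add: integral_unique mult.commute)
qed

lemma log_convex_beta_laplace:
  assumes "0 < a" "0 < d1" "0 < d2"
  shows "convex_on {0<..} (\<lambda>s. ln (beta_laplace a d1 d2 s))"
  using assms
  by (intro log_convex_laplace_integral[where \<phi> = "beta_weight a" and A = "{0<..<1}"
        and \<rho> = "\<lambda>w. w / d1 + (1 - w) / d2"]
      has_integral_beta_laplace beta_laplace_pos beta_weight_nonneg) auto

section \<open>The density of \<open>d1 X1 + d2 X2\<close>\<close>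

text \<open>\<open>gamma_lincomb_dens a d1 d2 s\<close> is the density of the uncentred sum \<open>d1 X1 + d2 X2\<close> at \<open>s\<close>:
  writing \<open>d1 X1 = s w\<close> turns the convolution integral into the \<open>w\<close>-integral \<open>beta_laplace\<close>.\<close>

definition gamma_lincomb_dens :: "real \<Rightarrow> real \<Rightarrow> real \<Rightarrow> real \<Rightarrow> real" where
  "gamma_lincomb_dens a d1 d2 s =
     (if 0 < s then s powr (2 * a - 1) * beta_laplace a d1 d2 s / ((d1 * d2) powr a * Gamma a ^ 2)
      else 0)"

lemma gamma_lincomb_dens_nonneg:
  assumes "0 < a" "0 < d1" "0 < d2"
  shows "0 \<le> gamma_lincomb_dens a d1 d2 s"
proof -
  have "Gamma a \<noteq> 0" using Gamma_real_pos[OF assms(1)] by linarith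
  then show ?thesis
    using assms beta_laplace_pos[of a d1 d2 s]
    by (auto simp: gamma_lincomb_dens_def intro!: divide_nonneg_pos mult_nonneg_nonneg mult_pos_pos)
qed

lemma scaled_centered_dens_conv_integrand:
  assumes "0 < a" "0 < d1" "0 < d2" "0 < s"
  shows "scaled_centered_dens a d1 (s * w - a * d1) * scaled_centered_dens a d2 (s * (1 - w) - a * d2)
       = indicator {0<..<1} w * (s powr (2 * a - 2) / ((d1 * d2) powr a * Gamma a ^ 2)
           * (beta_weight a w * exp (- (s * (w / d1 + (1 - w) / d2)))))"
proof -
  have factor: "scaled_centered_dens a d (s * v - a * d)
      = (if 0 < v then s powr (a - 1) * v powr (a - 1) * exp (- (s * v / d)) / (d powr a * Gamma a) else 0)"
    if "0 < d" for d v
  proof -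
    have "(s * v - a * d) / d + a = s * v / d"
      using that by (simp add: field_simps)
    moreover have "d powr a = d * d powr (a - 1)"
      using that by (simp add: powr_mult_base)
    ultimately show ?thesis
      using that assms
      by (auto simp: scaled_centered_dens_def gamma_dens_def zero_less_mult_iff zero_less_divide_iff
          powr_divide powr_mult field_simps)
  qed
  have "exp (- (s * w / d1)) * exp (- (s * (1 - w) / d2)) = exp (- (s * (w / d1 + (1 - w) / d2)))"
    by (simp add: exp_add[symmetric] field_simps)
  moreover have "s powr (a - 1) * s powr (a - 1) = s powr (2 * a - 2)"
    by (simp add: powr_add[symmetric])
  ultimately show ?thesis
    unfolding factor[OF assms(2)] factor[OF assms(3)] using assms
    by (simp add: beta_weight_def powr_mult power2_eq_square field_simps)
qed

lemma nn_integral_conv_scaled_centered_dens: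
  assumes "0 < a" "0 < d1" "0 < d2"
  shows "(\<integral>\<^sup>+t. ennreal (scaled_centered_dens a d1 t * scaled_centered_dens a d2 (x - t)) \<partial>lborel)
       = ennreal (gamma_lincomb_dens a d1 d2 (x + a * (d1 + d2)))"
proof (cases "0 < x + a * (d1 + d2)")
  case False
  have zero: "scaled_centered_dens a d1 t * scaled_centered_dens a d2 (x - t) = 0" for t
    using False assms scaled_centered_dens_pos_iff[of a d1 t] scaled_centered_dens_pos_iff[of a d2 "x - t"]
      scaled_centered_dens_nonneg[of a d1 t] scaled_centered_dens_nonneg[of a d2 "x - t"]
    by (auto simp: algebra_simps)
  then have "(\<integral>\<^sup>+t. ennreal (scaled_centered_dens a d1 t * scaled_centered_dens a d2 (x - t)) \<partial>lborel)
      = (\<integral>\<^sup>+t. 0 \<partial>lborel)"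
    by (simp add: zero)
  then show ?thesis
    using False by (simp add: gamma_lincomb_dens_def)
next
  case True
  define s where "s = x + a * (d1 + d2)"
  have s: "0 < s" using True by (simp add: s_def)
  define C where "C = s powr (2 * a - 2) / ((d1 * d2) powr a * Gamma a ^ 2)"
  let ?F = "\<lambda>t. scaled_centered_dens a d1 t * scaled_centered_dens a d2 (x - t)"
  have "(\<integral>\<^sup>+t. ennreal (?F t) \<partial>lborel) = ennreal s * (\<integral>\<^sup>+w. ennreal (?F (- a * d1 + s * w)) \<partial>lborel)"
    using nn_integral_real_affine[of "\<lambda>t. ennreal (?F t)" s "- a * d1"] s by simp
  also have "(\<integral>\<^sup>+w. ennreal (?F (- a * d1 + s * w)) \<partial>lborel)
      = (\<integral>\<^sup>+w. ennreal (indicator {0<..<1} w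
          * (C * (beta_weight a w * exp (- (s * (w / d1 + (1 - w) / d2)))))) \<partial>lborel)"
  proof (intro nn_integral_cong)
    fix w :: real
    have "x - (- a * d1 + s * w) = s * (1 - w) - a * d2"
      by (simp add: s_def algebra_simps)
    then show "ennreal (?F (- a * d1 + s * w)) = ennreal (indicator {0<..<1} w
        * (C * (beta_weight a w * exp (- (s * (w / d1 + (1 - w) / d2))))))"
      using scaled_centered_dens_conv_integrand[OF assms s, of w]
      by (simp add: C_def mult.assoc add.commute[of "- a * d1"])
  qed
  also have "\<dots> = ennreal (C * beta_laplace a d1 d2 s)"
    using assms s
    by (intro nn_integral_has_integral_lebesgue has_integral_mult_right has_integral_beta_laplace)
       (auto simp: C_def beta_weight_nonneg)
  also have "ennreal s * ennreal (C * beta_laplace a d1 d2 s) = ennreal (s * (C * beta_laplace a d1 d2 s))"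
    using s by (simp add: ennreal_mult')
  also have "s * (C * beta_laplace a d1 d2 s) = gamma_lincomb_dens a d1 d2 s"
    using s by (simp add: C_def gamma_lincomb_dens_def powr_mult_base)
  finally show ?thesis by (simp add: s_def)
qed

lemma lincomb_dens_eq_gamma_lincomb_dens:
  assumes "0 < a" "0 < d1" "0 < d2"
  shows "lincomb_dens a d1 d2 x = gamma_lincomb_dens a d1 d2 (x + a * (d1 + d2))"
proof -
  have "(\<lambda>t. scaled_centered_dens a d1 t * scaled_centered_dens a d2 (x - t)) \<in> borel_measurable lborel"
    by measurable
  then have "integrable lborel (\<lambda>t. scaled_centered_dens a d1 t * scaled_centered_dens a d2 (x - t))
      \<and> (LINT t|lborel. scaled_centered_dens a d1 t * scaled_centered_dens a d2 (x - t))
        = gamma_lincomb_dens a d1 d2 (x + a * (d1 + d2))"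
    using assms
    by (intro nn_integral_eq_integrable[THEN iffD1] nn_integral_conv_scaled_centered_dens
        AE_I2 mult_nonneg_nonneg scaled_centered_dens_nonneg gamma_lincomb_dens_nonneg)
  then show ?thesis
    using assms by (simp add: lincomb_dens_def conv_dens_def)
qed

lemma conv_dens_commute: "conv_dens f g x = conv_dens g f x"
proof -
  have "conv_dens f g x = \<bar>- 1\<bar> *\<^sub>R (\<integral>u. f (x + - 1 * u) * g (x - (x + - 1 * u)) \<partial>lborel)"
    unfolding conv_dens_def by (rule lborel_integral_real_affine) simp
  then show ?thesis
    by (simp add: conv_dens_def mult.commute)
qed

lemma lincomb_dens_commute: "lincomb_dens a d1 d2 = lincomb_dens a d2 d1"
  unfolding lincomb_dens_def by (auto intro!: ext conv_dens_commute)

lemma lincomb_dens_eq_0: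
  assumes "0 < a" "0 \<le> d1" "0 < d2" "x \<le> - a * (d1 + d2)"
  shows "lincomb_dens a d1 d2 x = 0"
proof (cases "d1 = 0")
  case True
  then show ?thesis
    using assms scaled_centered_dens_pos_iff[of a d2 x] scaled_centered_dens_nonneg[of a d2 x]
    by (simp add: lincomb_dens_def)
next
  case False
  then show ?thesis
    using assms by (simp add: lincomb_dens_eq_gamma_lincomb_dens gamma_lincomb_dens_def)
qed

lemma lincomb_dens_same_scale:
  assumes "0 < a" "0 < c"
  shows "lincomb_dens a c c x = scaled_centered_dens (2 * a) c x"
proof (cases "0 < x + a * (c + c)")
  case False
  then show ?thesis
    using assms scaled_centered_dens_pos_iff[of "2 * a" c x] scaled_centered_dens_nonneg[of "2 * a" c x]
    by (simp add: lincomb_dens_eq_gamma_lincomb_dens gamma_lincomb_dens_def)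
next
  case True
  define s where "s = x + a * (c + c)"
  have s: "0 < s" using True by (simp add: s_def)
  have arg: "x / c + 2 * a = s / c"
    using assms by (simp add: s_def field_simps)
  have "(c * c) powr a = c powr (1 + (2 * a - 1))"
    using assms by (simp add: powr_mult powr_add[symmetric])
  also have "\<dots> = c * c powr (2 * a - 1)"
    using assms by (simp add: powr_mult_base)
  finally have c_powr: "(c * c) powr a = c powr (2 * a - 1) * c"
    by (simp add: mult.commute)
  have Gamma: "Gamma a \<noteq> 0" "Gamma (2 * a) \<noteq> 0"
    using Gamma_real_pos[of a] Gamma_real_pos[of "2 * a"] assms by linarith+
  have Beta: "Beta a a = Gamma a ^ 2 / Gamma (2 * a)"
    unfolding Beta_def power2_eq_square mult_2 ..
  have "lincomb_dens a c c x = gamma_lincomb_dens a c c s"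
    using assms by (simp add: lincomb_dens_eq_gamma_lincomb_dens s_def)
  also have "\<dots> = s powr (2 * a - 1) * (exp (- (s / c)) * Beta a a) / ((c * c) powr a * Gamma a ^ 2)"
    unfolding gamma_lincomb_dens_def beta_laplace_same_scale[OF assms] using s by simp
  also have "\<dots> = (s / c) powr (2 * a - 1) * exp (- (s / c)) / Gamma (2 * a) / c"
    unfolding Beta c_powr using assms s Gamma by (simp add: powr_divide)
  also have "\<dots> = scaled_centered_dens (2 * a) c x"
    using assms s by (simp add: scaled_centered_dens_def gamma_dens_def arg)
  finally show ?thesis .
qed

section \<open>First moments\<close>

lemma nn_integral_shifted_conv_integrand:
  assumes "0 < a" "0 < d1" "0 < d2" "a * (d1 + d2) \<le> b"
  shows "(\<integral>\<^sup>+x. ennreal ((x + b) * (scaled_centered_dens a d1 t * scaled_centered_dens a d2 (x - t))) \<partial>lborel)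
       = ennreal ((t + b) * scaled_centered_dens a d1 t)"
proof -
  let ?f = "scaled_centered_dens a d1" and ?g = "scaled_centered_dens a d2"
  have [simp]: "0 \<le> ?f t" "0 \<le> ?g y" for y
    using assms by (simp_all add: scaled_centered_dens_nonneg)
  have "(\<integral>\<^sup>+x. ennreal ((x + b) * (?f t * ?g (x - t))) \<partial>lborel)
      = ennreal (?f t) * (\<integral>\<^sup>+x. ennreal ((x + b) * ?g (x - t)) \<partial>lborel)"
    by (subst nn_integral_cmult[symmetric])
       (auto intro!: nn_integral_cong simp: ennreal_mult'[symmetric] mult_ac)
  also have "(\<integral>\<^sup>+x. ennreal ((x + b) * ?g (x - t)) \<partial>lborel)
      = (\<integral>\<^sup>+y. ennreal ((y + (t + b)) * ?g y) \<partial>lborel)"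
    using nn_integral_real_affine[of "\<lambda>x. ennreal ((x + b) * ?g (x - t))" 1 t]
    by (simp add: algebra_simps)
  finally have inner: "(\<integral>\<^sup>+x. ennreal ((x + b) * (?f t * ?g (x - t))) \<partial>lborel)
      = ennreal (?f t) * (\<integral>\<^sup>+y. ennreal ((y + (t + b)) * ?g y) \<partial>lborel)" .
  show ?thesis
  proof (cases "0 < ?f t")
    case True
    then have "a * d2 \<le> t + b"
      using assms scaled_centered_dens_pos_iff[of a d1 t] by (simp add: algebra_simps)
    moreover from this have "0 \<le> t + b"
      using assms by (smt (verit) mult_nonneg_nonneg)
    ultimately have "(\<integral>\<^sup>+y. ennreal ((y + (t + b)) * ?g y) \<partial>lborel) = ennreal (t + b)"
      using assms by (intro nn_integral_shifted_scaled_centered_dens) auto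
    then show ?thesis
      unfolding inner using \<open>0 \<le> t + b\<close> by (simp add: ennreal_mult[symmetric] mult.commute)
  next
    case False
    then have "?f t = 0"
      using \<open>0 \<le> ?f t\<close> by linarith
    then show ?thesis
      by (simp add: inner)
  qed
qed

lemma nn_integral_shifted_lincomb_dens:
  assumes "0 < a" "0 \<le> d1" "0 < d2" "a * (d1 + d2) \<le> b"
  shows "(\<integral>\<^sup>+x. ennreal ((x + b) * lincomb_dens a d1 d2 x) \<partial>lborel) = ennreal b"
proof (cases "d1 = 0")
  case True
  then show ?thesis
    using assms nn_integral_shifted_scaled_centered_dens[of a d2 b] by (simp add: lincomb_dens_def)
next
  case False
  then have d1: "0 < d1" using assms by simp
  let ?f = "scaled_centered_dens a d1" and ?g = "scaled_centered_dens a d2"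
  have "(\<integral>\<^sup>+x. ennreal ((x + b) * lincomb_dens a d1 d2 x) \<partial>lborel)
      = (\<integral>\<^sup>+x. (\<integral>\<^sup>+t. ennreal ((x + b) * (?f t * ?g (x - t))) \<partial>lborel) \<partial>lborel)"
  proof (intro nn_integral_cong)
    fix x :: real
    have "ennreal ((x + b) * lincomb_dens a d1 d2 x)
        = ennreal (x + b) * (\<integral>\<^sup>+t. ennreal (?f t * ?g (x - t)) \<partial>lborel)"
      using assms d1
      by (simp only: lincomb_dens_eq_gamma_lincomb_dens nn_integral_conv_scaled_centered_dens
          ennreal_mult''[OF gamma_lincomb_dens_nonneg])
    also have "\<dots> = (\<integral>\<^sup>+t. ennreal ((x + b) * (?f t * ?g (x - t))) \<partial>lborel)"
      using assms d1
      by (subst nn_integral_cmult[symmetric])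
         (auto intro!: nn_integral_cong simp: ennreal_mult'' scaled_centered_dens_nonneg)
    finally show "ennreal ((x + b) * lincomb_dens a d1 d2 x)
        = (\<integral>\<^sup>+t. ennreal ((x + b) * (?f t * ?g (x - t))) \<partial>lborel)" .
  qed
  also have "\<dots> = (\<integral>\<^sup>+t. (\<integral>\<^sup>+x. ennreal ((x + b) * (?f t * ?g (x - t))) \<partial>lborel) \<partial>lborel)"
    by (rule lborel_pair.Fubini'[symmetric]) measurable
  also have "\<dots> = (\<integral>\<^sup>+t. ennreal ((t + b) * ?f t) \<partial>lborel)"
    using assms d1 by (intro nn_integral_cong nn_integral_shifted_conv_integrand) auto
  also have "\<dots> = ennreal b"
  proof (rule nn_integral_shifted_scaled_centered_dens)
    show "a * d1 \<le> b"
      using assms(4) mult_pos_pos[OF assms(1) assms(3)] distrib_left[of a d1 d2] by linarith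
  qed (use assms d1 in auto)
  finally show ?thesis .
qed

lemma nn_integral_pos_of_pos_on_interval:
  fixes f :: "real \<Rightarrow> real"
  assumes [measurable]: "f \<in> borel_measurable borel"
    and "p < q" "\<And>x. p < x \<Longrightarrow> x < q \<Longrightarrow> 0 < f x"
  shows "0 < (\<integral>\<^sup>+x. ennreal (f x) \<partial>lborel)"
proof -
  have "\<not> (AE x in lborel. ennreal (f x) = 0)"
  proof
    assume "AE x in lborel. ennreal (f x) = 0"
    then have "AE x in lborel. x \<notin> {p<..<q}"
      by eventually_elim (use assms(3) in fastforce)
    then have "emeasure lborel {p<..<q} = 0"
      by (subst (asm) AE_iff_measurable[of "{p<..<q}"]) auto
    then show False
      using \<open>p < q\<close> by simp
  qed
  then show ?thesis
    by (simp add: nn_integral_0_iff_AE zero_less_iff_neq_zero)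
qed

lemma ennreal_pos_part_add:
  fixes x \<delta> g :: real
  assumes "0 \<le> x" "0 \<le> g" "0 \<le> \<delta>"
  shows "ennreal ((x - \<delta>) * g) + ennreal (\<delta> * g) = ennreal (x * g) + ennreal ((\<delta> - x) * g)"
proof (cases "x \<le> \<delta>")
  case True
  then have "(x - \<delta>) * g \<le> 0"
    using assms by (intro mult_nonpos_nonneg) auto
  moreover have "ennreal (x * g) + ennreal ((\<delta> - x) * g) = ennreal (\<delta> * g)"
    using True assms mult_right_mono[OF True assms(2)]
    by (subst ennreal_plus[symmetric]) (auto simp: algebra_simps)
  ultimately show ?thesis
    by (simp add: ennreal_neg)
next
  case False
  then have "(\<delta> - x) * g \<le> 0"
    using assms by (intro mult_nonpos_nonneg) auto
  moreover have "ennreal ((x - \<delta>) * g) + ennreal (\<delta> * g) = ennreal (x * g)"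
    using False assms mult_right_mono[of \<delta> x g]
    by (subst ennreal_plus[symmetric]) (auto simp: algebra_simps)
  ultimately show ?thesis
    by (simp add: ennreal_neg)
qed

lemma nn_integral_gamma_dens_excess:
  assumes "0 < b" "0 < c" "0 < \<delta>" "\<delta> \<le> c * b"
  shows "ennreal (c * b - \<delta>) < (\<integral>\<^sup>+u. ennreal ((c * u - \<delta>) * gamma_dens b u) \<partial>lborel)"
proof -
  let ?\<gamma> = "gamma_dens b"
  define M where "M = (\<integral>\<^sup>+u. ennreal ((c * u - \<delta>) * ?\<gamma> u) \<partial>lborel)"
  define D where "D = (\<integral>\<^sup>+u. ennreal ((\<delta> - c * u) * ?\<gamma> u) \<partial>lborel)"
  have split: "ennreal ((c * u - \<delta>) * ?\<gamma> u) + ennreal (\<delta> * ?\<gamma> u)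
      = ennreal (c * u * ?\<gamma> u) + ennreal ((\<delta> - c * u) * ?\<gamma> u)" for u
    using assms ennreal_pos_part_add[of "c * u" "?\<gamma> u" \<delta>]
    by (cases "0 < u") (auto simp: gamma_dens_nonneg gamma_dens_def)
  have "M + ennreal \<delta> = ennreal (c * b) + D"
  proof -
    have "M + ennreal \<delta> = (\<integral>\<^sup>+u. ennreal ((c * u - \<delta>) * ?\<gamma> u) + ennreal (\<delta> * ?\<gamma> u) \<partial>lborel)"
      using assms nn_integral_affine_times_gamma_dens[of b 0 \<delta>]
      by (simp add: M_def nn_integral_add)
    also have "\<dots> = (\<integral>\<^sup>+u. ennreal (c * u * ?\<gamma> u) + ennreal ((\<delta> - c * u) * ?\<gamma> u) \<partial>lborel)"
      by (simp only: split)
    also have "\<dots> = ennreal (c * b) + D"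
      using assms nn_integral_affine_times_gamma_dens[of b c 0]
      by (simp add: D_def nn_integral_add)
    finally show ?thesis .
  qed
  moreover have "0 < D"
    unfolding D_def using assms
    by (intro nn_integral_pos_of_pos_on_interval[where p = 0 and q = "\<delta> / c"])
       (auto simp: gamma_dens_pos_iff field_simps)
  moreover have "D \<noteq> top"
  proof -
    have "D \<le> (\<integral>\<^sup>+u. ennreal (\<delta> * ?\<gamma> u) \<partial>lborel)"
      unfolding D_def
    proof (intro nn_integral_mono ennreal_leI)
      fix u :: real
      have "0 \<le> u * ?\<gamma> u"
        using assms by (cases "0 < u") (auto simp: gamma_dens_def)
      then have "0 \<le> c * (u * ?\<gamma> u)"
        using assms by simp
      then show "(\<delta> - c * u) * ?\<gamma> u \<le> \<delta> * ?\<gamma> u"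
        by (simp add: algebra_simps)
    qed
    also have "\<dots> = ennreal \<delta>"
      using assms nn_integral_affine_times_gamma_dens[of b 0 \<delta>] by simp
    finally show ?thesis
      by (rule neq_top_trans[OF ennreal_neq_top])
  qed
  moreover have "M \<noteq> top"
    using calculation by (metis ennreal_add_eq_top ennreal_neq_top)
  ultimately show ?thesis
    using assms unfolding M_def[symmetric]
    by (cases M; cases D) (auto simp: ennreal_plus[symmetric] simp del: ennreal_plus intro!: ennreal_lessI)
qed

lemma nn_integral_shifted_scaled_centered_dens_gt:
  assumes "0 < \<beta>" "0 < c" "0 \<le> b" "b < \<beta> * c"
  shows "ennreal b < (\<integral>\<^sup>+x. ennreal ((x + b) * scaled_centered_dens \<beta> c x) \<partial>lborel)"
proof -
  have "ennreal b = ennreal (c * \<beta> - (\<beta> * c - b))" by simp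
  also have "\<dots> < (\<integral>\<^sup>+u. ennreal ((c * u - (\<beta> * c - b)) * gamma_dens \<beta> u) \<partial>lborel)"
    using assms by (intro nn_integral_gamma_dens_excess) auto
  also have "\<dots> = (\<integral>\<^sup>+u. ennreal ((c * (u - \<beta>) + b) * gamma_dens \<beta> u) \<partial>lborel)"
    by (intro nn_integral_cong) (simp add: algebra_simps)
  also have "\<dots> = (\<integral>\<^sup>+x. ennreal ((x + b) * scaled_centered_dens \<beta> c x) \<partial>lborel)"
    by (rule nn_integral_scaled_centered_dens[symmetric]) (use assms in auto)
  finally show ?thesis .
qed

text \<open>Both \<open>U\<close> and \<open>V\<close> have mean \<open>0\<close>, but \<open>U\<close> lives on \<open>(x0, \<infinity>)\<close> while \<open>V\<close> puts mass below \<open>x0\<close>;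
  so \<open>E (V - x0)\<^sup>+ > E (U - x0) = - x0\<close>, which is impossible if \<open>fV \<le> fU\<close> on \<open>(x0, \<infinity>)\<close>.\<close>

lemma lincomb_dens_same_scale_exceeds:
  assumes "0 < a" "0 \<le> d1" "0 < d2" "0 < c" "d1 + d2 < 2 * c"
  shows "\<exists>x > - a * (d1 + d2). lincomb_dens a d1 d2 x < lincomb_dens a c c x"
proof (rule ccontr)
  assume contra: "\<not> ?thesis"
  have le: "lincomb_dens a c c x \<le> lincomb_dens a d1 d2 x" if "- a * (d1 + d2) < x" for x
    using contra that by (meson not_le)
  define b where "b = a * (d1 + d2)"
  have "ennreal b < (\<integral>\<^sup>+x. ennreal ((x + b) * scaled_centered_dens (2 * a) c x) \<partial>lborel)"
    using assms by (intro nn_integral_shifted_scaled_centered_dens_gt) (auto simp: b_def)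
  also have "\<dots> \<le> (\<integral>\<^sup>+x. ennreal ((x + b) * lincomb_dens a d1 d2 x) \<partial>lborel)"
  proof (intro nn_integral_mono ennreal_leI)
    fix x :: real
    show "(x + b) * scaled_centered_dens (2 * a) c x \<le> (x + b) * lincomb_dens a d1 d2 x"
    proof (cases "- b < x")
      case True
      then show ?thesis
        using le[of x] assms by (intro mult_left_mono) (auto simp: b_def lincomb_dens_same_scale)
    next
      case False
      then have "(x + b) * scaled_centered_dens (2 * a) c x \<le> 0"
        using assms by (intro mult_nonpos_nonneg scaled_centered_dens_nonneg) auto
      moreover have "0 \<le> (x + b) * lincomb_dens a d1 d2 x"
        using False assms by (simp add: b_def lincomb_dens_eq_0)
      ultimately show ?thesis by linarith
    qed
  qed
  also have "\<dots> = ennreal b"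
    using assms by (intro nn_integral_shifted_lincomb_dens) (auto simp: b_def)
  finally show False by simp
qed

section \<open>Sign changes of convex functions\<close>

lemma convex_on_cong:
  assumes "\<And>x. x \<in> S \<Longrightarrow> f x = g x"
  shows "convex_on S f \<longleftrightarrow> convex_on S g"
  unfolding convex_on_def using assms by (auto simp: convexD)

lemma convex_on_ln_add_minus_ln:
  assumes "0 \<le> \<delta>"
  shows "convex_on {0<..} (\<lambda>s::real. ln (s + \<delta>) - ln s)"
proof (rule convex_on_realI[where f' = "\<lambda>s. 1 / (s + \<delta>) - 1 / s"])
  show "((\<lambda>s. ln (s + \<delta>) - ln s) has_real_derivative 1 / (x + \<delta>) - 1 / x) (at x)"
    if "x \<in> {0<..}" for x
    using that assms by (auto intro!: derivative_eq_intros)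
  show "1 / (x + \<delta>) - 1 / x \<le> 1 / (y + \<delta>) - 1 / y"
    if "x \<in> {0<..}" "y \<in> {0<..}" "x \<le> y" for x y
  proof -
    have "\<delta> / (y * (y + \<delta>)) \<le> \<delta> / (x * (x + \<delta>))"
      using that assms by (intro divide_left_mono mult_mono) auto
    then show ?thesis
      using that assms by (simp add: field_simps)
  qed
qed simp

lemma convex_on_neg_between:
  fixes Q :: "real \<Rightarrow> real"
  assumes "convex_on I Q" "x \<in> I" "y \<in> I" "x < t" "t < y"
    and "Q x \<le> 0" "Q y \<le> 0" "Q x < 0 \<or> Q y < 0"
  shows "Q t < 0"
proof -
  define \<theta> where "\<theta> = (t - x) / (y - x)"
  have \<theta>: "0 < \<theta>" "\<theta> < 1"
    using assms by (auto simp: \<theta>_def field_simps)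
  have "\<theta> * (y - x) = t - x"
    using assms by (simp add: \<theta>_def)
  then have t: "t = (1 - \<theta>) * x + \<theta> * y"
    by (simp add: algebra_simps)
  have "Q t \<le> (1 - \<theta>) * Q x + \<theta> * Q y"
    using convex_onD[OF assms(1), of \<theta> x y] \<theta> assms t by simp
  moreover have "(1 - \<theta>) * Q x \<le> 0" "\<theta> * Q y \<le> 0"
    using \<theta> assms by (simp_all add: mult_nonneg_nonpos)
  moreover have "(1 - \<theta>) * Q x < 0 \<or> \<theta> * Q y < 0"
    using \<theta> assms(8) by (auto simp: mult_pos_neg)
  ultimately show ?thesis by linarith
qed

lemma convex_on_neg_right_of:
  fixes Q :: "real \<Rightarrow> real"
  assumes "convex_on {0<..} Q" "0 < s0" "Q s0 < 0"
  shows "\<exists>t > s0. Q t < 0"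
proof -
  have "continuous_on {0<..} Q"
    by (rule convex_on_continuous[OF _ assms(1)]) simp
  then have "(Q \<longlongrightarrow> Q s0) (at_right s0)"
    using assms(2) by (auto simp: continuous_on_eq_continuous_at isCont_def intro: filterlim_mono at_le)
  then have "\<forall>\<^sub>F t in at_right s0. Q t < 0"
    using assms(3) by (intro order_tendstoD(2)) auto
  then obtain b where "s0 < b" "\<And>t. s0 < t \<Longrightarrow> t < b \<Longrightarrow> Q t < 0"
    by (auto simp: eventually_at_right_field)
  then show ?thesis
    by (intro exI[of _ "(s0 + b) / 2"]) auto
qed

text \<open>The negativity set \<open>{Q < 0}\<close> of a convex \<open>Q\<close> is an interval, and a zero of \<open>Q\<close> outside its closure
  would, by convexity against a point where \<open>Q < 0\<close>, force \<open>Q < 0\<close> beyond that closure.\<close>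

lemma convex_on_sign_pattern:
  fixes Q :: "real \<Rightarrow> real"
  assumes conv: "convex_on {0<..} Q"
    and at_0: "\<forall>\<^sub>F s in at_right 0. 0 < Q s" and at_top: "\<forall>\<^sub>F s in at_top. 0 < Q s"
    and s0: "0 < s0" "Q s0 < 0"
  shows "\<exists>s1 s2. 0 < s1 \<and> s1 < s2 \<and> (\<forall>s \<in> {0<..<s1} \<union> {s2<..}. 0 < Q s) \<and> (\<forall>s \<in> {s1<..<s2}. Q s < 0)"
proof -
  obtain \<epsilon> where \<epsilon>: "0 < \<epsilon>" "\<And>s. 0 < s \<Longrightarrow> s < \<epsilon> \<Longrightarrow> 0 < Q s"
    using at_0 by (auto simp: eventually_at_right_field)
  obtain N where N: "\<And>s. N < s \<Longrightarrow> 0 < Q s"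
    using at_top by (auto simp: eventually_at_top_dense)
  define S where "S = {s. 0 < s \<and> Q s < 0}"
  have s0S: "s0 \<in> S" using s0 by (simp add: S_def)
  have S_lower: "\<epsilon> \<le> s" and S_upper: "s \<le> N" if "s \<in> S" for s
    using that \<epsilon>(2)[of s] N[of s] by (force simp: S_def)+
  have bdd: "bdd_below S" "bdd_above S"
    using S_lower S_upper by (meson bdd_belowI bdd_aboveI)+
  define s1 where "s1 = Inf S"
  define s2 where "s2 = Sup S"
  have s1_le: "s1 \<le> s" and le_s2: "s \<le> s2" if "s \<in> S" for s
    using that bdd by (auto simp: s1_def s2_def intro: cInf_lower cSup_upper)
  have "\<epsilon> \<le> s1"
    unfolding s1_def using s0S S_lower by (intro cInf_greatest) auto
  have mid: "Q s < 0" if s: "s1 < s" "s < s2" for s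
  proof -
    obtain p q where "p \<in> S" "p < s" "q \<in> S" "s < q"
      using s cInf_less_iff[of S s] less_cSup_iff[of S s] s0S bdd by (auto simp: s1_def s2_def)
    then show ?thesis
      by (intro convex_on_neg_between[OF conv, of p q]) (auto simp: S_def)
  qed
  have left: "0 < Q s" if "0 < s" "s < s1" for s
  proof (rule ccontr)
    assume "\<not> 0 < Q s"
    then have "Q ((s + s1) / 2) < 0"
      using that s0 s1_le[OF s0S] by (intro convex_on_neg_between[OF conv, of s s0]) auto
    then have "(s + s1) / 2 \<in> S"
      using that by (simp add: S_def)
    then show False
      using s1_le that by fastforce
  qed
  have right: "0 < Q s" if "s2 < s" for s
  proof (rule ccontr)
    assume "\<not> 0 < Q s"
    then have "Q ((s2 + s) / 2) < 0"
      using that s0 le_s2[OF s0S] by (intro convex_on_neg_between[OF conv, of s0 s]) auto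
    then have "(s2 + s) / 2 \<in> S"
      using that s0 le_s2[OF s0S] by (simp add: S_def)
    then show False
      using le_s2 that by fastforce
  qed
  obtain t where "s0 < t" "Q t < 0"
    using convex_on_neg_right_of[OF conv s0] by blast
  then have "t \<in> S"
    using s0 by (simp add: S_def)
  then have "s1 < s2"
    using le_s2 s1_le[OF s0S] \<open>s0 < t\<close> by fastforce
  then show ?thesis
    using \<epsilon>(1) \<open>\<epsilon> \<le> s1\<close> left right mid by (intro exI[of _ s1] exI[of _ s2]) auto
qed

section \<open>Crossings with a Gamma density\<close>

lemma gamma_dens_scaled:
  assumes "0 < c" "0 < y"
  shows "gamma_dens b (y / c) / c = y powr (b - 1) * exp (- (y / c)) / (c powr b * Gamma b)"
proof -
  have "c powr b = c * c powr (b - 1)"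
    using assms by (simp add: powr_mult_base)
  then show ?thesis
    using assms by (simp add: gamma_dens_def powr_divide)
qed

text \<open>Writing \<open>U s = s\<^bsup>b-1\<^esup> G s\<close> and \<open>V s = (s + \<delta>)\<^bsup>b-1\<^esup> W s\<close> with \<open>W\<close> log-affine, the difference
  \<open>ln U - ln V = (1 - b) (ln (s + \<delta>) - ln s) + ln G - ln W\<close> is convex; and \<open>(s + \<delta>)\<^bsup>b-1\<^esup> \<le> s\<^bsup>b-1\<^esup>\<close>
  turns \<open>W < G\<close> into \<open>V < U\<close>.\<close>

lemma gamma_dens_crossings:
  fixes U G :: "real \<Rightarrow> real"
  assumes b: "0 < b" "b \<le> 1" and c: "0 < c" and \<delta>: "0 < \<delta>"
    and U: "\<And>s. 0 < s \<Longrightarrow> U s = s powr (b - 1) * G s"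
    and G_pos: "\<And>s. 0 < s \<Longrightarrow> 0 < G s"
    and G_log_convex: "convex_on {0<..} (\<lambda>s. ln (G s))"
    and G_at_0: "\<forall>\<^sub>F s in at_right 0. exp (- ((s + \<delta>) / c)) / (c powr b * Gamma b) < G s"
    and G_at_top: "\<forall>\<^sub>F s in at_top. exp (- ((s + \<delta>) / c)) / (c powr b * Gamma b) < G s"
    and s0: "0 < s0" "U s0 < gamma_dens b ((s0 + \<delta>) / c) / c"
  shows "\<exists>s1 s2. 0 < s1 \<and> s1 < s2
    \<and> (\<forall>s \<in> {0<..<s1} \<union> {s2<..}. gamma_dens b ((s + \<delta>) / c) / c < U s)
    \<and> (\<forall>s \<in> {s1<..<s2}. U s < gamma_dens b ((s + \<delta>) / c) / c)"
proof -
  define W where "W s = exp (- ((s + \<delta>) / c)) / (c powr b * Gamma b)" for s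
  define V where "V s = gamma_dens b ((s + \<delta>) / c) / c" for s
  have W_pos: "0 < W s" for s
    using b c by (simp add: W_def)
  have V_eq: "V s = (s + \<delta>) powr (b - 1) * W s" if "0 < s" for s
    using that \<delta> c by (simp add: V_def W_def gamma_dens_scaled)
  have U_pos: "0 < U s" and V_pos: "0 < V s" if "0 < s" for s
    using that U G_pos V_eq W_pos \<delta> by simp_all
  have V_less_U: "V s < U s" if "0 < s" "W s < G s" for s
  proof -
    have "(s + \<delta>) powr (b - 1) \<le> s powr (b - 1)"
      using that \<delta> b by (intro powr_mono2') auto
    then have "V s \<le> s powr (b - 1) * W s"
      using V_eq that W_pos[of s] by (simp add: mult_right_mono)
    also have "\<dots> < U s"
      using that U by simp
    finally show ?thesis .
  qed
  define Q where "Q s = (1 - b) * (ln (s + \<delta>) - ln s) + ln (G s) + ((s + \<delta>) / c + ln (c powr b * Gamma b))"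
    for s
  have "Gamma b \<noteq> 0"
    using Gamma_real_pos[OF b(1)] by linarith
  then have Q_eq: "Q s = ln (U s) - ln (V s)" if "0 < s" for s
    using that \<delta> b c G_pos[OF that]
    by (simp add: Q_def U V_eq W_def ln_mult ln_div ln_powr algebra_simps)
  have Q_pos_iff: "0 < Q s \<longleftrightarrow> V s < U s" and Q_neg_iff: "Q s < 0 \<longleftrightarrow> U s < V s" if "0 < s" for s
    using that Q_eq U_pos V_pos by auto
  have affine: "convex_on {0<..} (\<lambda>s. (s + \<delta>) / c + ln (c powr b * Gamma b))"
    by (rule convex_on_realI[where f' = "\<lambda>_. 1 / c"]) (use c in \<open>auto intro!: derivative_eq_intros\<close>)
  have "convex_on {0<..} (\<lambda>s. (1 - b) * (ln (s + \<delta>) - ln s))"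
    using b \<delta> by (intro convex_on_cmul convex_on_ln_add_minus_ln) auto
  then have "convex_on {0<..} Q"
    unfolding Q_def by (rule convex_on_add[OF convex_on_add[OF _ G_log_convex] affine])
  moreover have "\<forall>\<^sub>F s in at_right 0. 0 < Q s"
    using G_at_0 eventually_at_right_less[of 0]
    by eventually_elim (simp add: Q_pos_iff V_less_U W_def)
  moreover have "\<forall>\<^sub>F s in at_top. 0 < Q s"
    using G_at_top eventually_gt_at_top[of 0]
    by eventually_elim (simp add: Q_pos_iff V_less_U W_def)
  moreover have "Q s0 < 0"
    using s0 by (simp add: Q_neg_iff V_def)
  ultimately obtain s1 s2 where s12: "0 < s1" "s1 < s2"
    and pos: "\<forall>s \<in> {0<..<s1} \<union> {s2<..}. 0 < Q s" and neg: "\<forall>s \<in> {s1<..<s2}. Q s < 0"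
    using convex_on_sign_pattern[of Q s0] s0 by blast
  have "V s < U s" if "s \<in> {0<..<s1} \<union> {s2<..}" for s
    using that pos s12 Q_pos_iff[of s] by auto
  moreover have "U s < V s" if "s \<in> {s1<..<s2}" for s
    using that neg s12 Q_neg_iff[of s] by auto
  ultimately show ?thesis
    using s12 unfolding V_def by blast
qed

lemma scaled_centered_dens_shifted:
  assumes "0 < a" "0 < d" "0 < s"
  shows "scaled_centered_dens a d (s - a * d)
       = s powr (2 * a - 1) * (s powr (- a) * exp (- (s / d)) / (d powr a * Gamma a))"
proof -
  have "(s - a * d) / d + a = s / d"
    using assms by (simp add: field_simps)
  moreover have "d powr a = d * d powr (a - 1)"
    using assms by (simp add: powr_mult_base)
  moreover have "s powr (2 * a - 1) * s powr (- a) = s powr (a - 1)"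
    by (simp add: powr_add[symmetric])
  ultimately show ?thesis
    using assms by (simp add: scaled_centered_dens_def gamma_dens_def powr_divide field_simps)
qed

lemma eventually_exp_less_exp:
  fixes C1 C2 k r :: real
  assumes "r < k" "0 < C2"
  shows "\<forall>\<^sub>F s in at_top. C1 * exp (- (s * k)) < C2 * exp (- (s * r))"
proof -
  have "0 < k - r" using assms by simp
  then have "\<forall>\<^sub>F s in at_top. C1 / C2 < exp (s * (k - r))"
    by real_asymp
  then show ?thesis
  proof eventually_elim
    case (elim s)
    then have "C1 < C2 * exp (s * (k - r))"
      using assms by (simp add: field_simps)
    then have "C1 * exp (- (s * k)) < C2 * exp (s * (k - r)) * exp (- (s * k))"
      by simp
    then show ?case
      by (simp add: mult.assoc exp_add[symmetric] algebra_simps)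
  qed
qed

lemma beta_laplace_dominates_at_0:
  assumes "0 < a" "0 < d1" "0 < d2" "0 < c" "d1 * d2 \<le> c ^ 2" "0 < \<delta>"
  shows "\<forall>\<^sub>F s in at_right 0. exp (- ((s + \<delta>) / c)) / (c powr (2 * a) * Gamma (2 * a))
           < beta_laplace a d1 d2 s / ((d1 * d2) powr a * Gamma a ^ 2)"
proof -
  define M where "M = 1 / d1 + 1 / d2"
  have "\<forall>\<^sub>F s in at_right 0. s * M < (s + \<delta>) / c"
    using assms by real_asymp
  then show ?thesis
    using eventually_at_right_less[of 0]
  proof eventually_elim
    case (elim s)
    have G: "0 < Gamma a" "0 < Gamma (2 * a)"
      using assms by simp_all
    have "(d1 * d2) powr a \<le> (c ^ 2) powr a"
      using assms by (intro powr_mono2) auto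
    also have "(c ^ 2) powr a = c powr (2 * a)"
      using assms by (simp add: powr_powr[symmetric] powr_realpow)
    finally have c_powr: "(d1 * d2) powr a \<le> c powr (2 * a)" .
    have "exp (- ((s + \<delta>) / c)) / (c powr (2 * a) * Gamma (2 * a))
        < exp (- (s * M)) / (c powr (2 * a) * Gamma (2 * a))"
      using elim assms G by (intro divide_strict_right_mono) auto
    also have "\<dots> \<le> exp (- (s * M)) / ((d1 * d2) powr a * Gamma (2 * a))"
      using assms G c_powr by (intro divide_left_mono mult_right_mono mult_pos_pos) auto
    also have "\<dots> = exp (- (s * M)) * Beta a a / ((d1 * d2) powr a * Gamma a ^ 2)"
      using G by (simp add: Beta_def power2_eq_square mult_2 field_simps)
    also have "\<dots> \<le> beta_laplace a d1 d2 s / ((d1 * d2) powr a * Gamma a ^ 2)"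
      using beta_laplace_ge_exp[of a d1 d2 s] assms elim G
      by (intro divide_right_mono) (auto simp: M_def)
    finally show ?case .
  qed
qed

lemma beta_laplace_dominates_at_top:
  assumes "0 < a" "a \<le> 1" "0 < d1" "d1 < d2" "0 < c" "c < d2"
  shows "\<forall>\<^sub>F s in at_top. exp (- ((s + \<delta>) / c)) / (c powr (2 * a) * Gamma (2 * a))
           < beta_laplace a d1 d2 s / ((d1 * d2) powr a * Gamma a ^ 2)"
proof -
  have "1 / d2 < 1 / c" using assms by (simp add: frac_less2)
  then have "\<forall>\<^sub>F \<eta> in at_right 0. 1 / d2 + \<eta> * (1 / d1 - 1 / d2) < 1 / c"
    by real_asymp
  moreover have "\<forall>\<^sub>F \<eta> in at_right (0::real). \<eta> < 1"
    by real_asymp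
  ultimately have "\<forall>\<^sub>F \<eta> in at_right 0. 0 < \<eta> \<and> \<eta> < 1 \<and> 1 / d2 + \<eta> * (1 / d1 - 1 / d2) < 1 / c"
    using eventually_at_right_less[of 0] by eventually_elim auto
  then obtain \<eta> where \<eta>: "0 < \<eta>" "\<eta> < 1" "1 / d2 + \<eta> * (1 / d1 - 1 / d2) < 1 / c"
    using eventually_happens'[OF trivial_limit_at_right_real] by blast
  define r where "r = 1 / d2 + \<eta> * (1 / d1 - 1 / d2)"
  define D where "D = (d1 * d2) powr a * Gamma a ^ 2"
  have D: "0 < D"
    unfolding D_def using assms Gamma_real_pos[OF assms(1)] by (intro mult_pos_pos zero_less_power) auto
  have "\<forall>\<^sub>F s in at_top. exp (- (\<delta> / c)) / (c powr (2 * a) * Gamma (2 * a)) * exp (- (s * (1 / c)))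
      < \<eta> powr a / a / D * exp (- (s * r))"
    using \<eta> assms D by (intro eventually_exp_less_exp) (auto simp: r_def)
  then show ?thesis
    using eventually_ge_at_top[of 0]
  proof eventually_elim
    case (elim s)
    have "exp (- ((s + \<delta>) / c)) = exp (- (\<delta> / c)) * exp (- (s * (1 / c)))"
      by (simp add: exp_add[symmetric] add_divide_distrib)
    then have "exp (- ((s + \<delta>) / c)) / (c powr (2 * a) * Gamma (2 * a)) < \<eta> powr a / a * exp (- (s * r)) / D"
      using elim by simp
    also have "\<dots> \<le> beta_laplace a d1 d2 s / D"
      using beta_laplace_ge_tail[of a d1 d2 s \<eta>] assms elim \<eta> D
      by (intro divide_right_mono) (auto simp: r_def)
    finally show ?case by (simp add: D_def)
  qed
qed

lemma sqrt_mean_square_bounds: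
  fixes d1 d2 :: real
  assumes "0 \<le> d1" "d1 < d2"
  defines "c \<equiv> sqrt ((d1^2 + d2^2) / 2)"
  shows "0 < c" "c < d2" "d1 * d2 \<le> c ^ 2" "d1 + d2 < 2 * c" "sqrt (2 * (d1^2 + d2^2)) = 2 * c"
proof -
  have c2: "c ^ 2 = (d1^2 + d2^2) / 2"
    unfolding c_def by simp
  show "0 < c"
    unfolding c_def using assms by (intro real_sqrt_gt_zero) (simp add: add_nonneg_pos)
  have "d1^2 < d2^2"
    using assms by (intro power_strict_mono) auto
  then have "sqrt ((d1^2 + d2^2) / 2) < sqrt (d2^2)"
    by (simp only: real_sqrt_less_iff) simp
  then show "c < d2"
    using assms unfolding c_def by simp
  have "0 \<le> (d1 - d2)^2"
    by simp
  then show "d1 * d2 \<le> c ^ 2"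
    unfolding c2 by (simp add: power2_eq_square algebra_simps)
  have "0 < (d1 - d2)^2"
    using assms by simp
  then have "((d1 + d2) / 2)^2 < (d1^2 + d2^2) / 2"
    by (simp add: power2_eq_square algebra_simps)
  then have "(d1 + d2) / 2 < c"
    unfolding c_def by (rule real_less_rsqrt)
  then show "d1 + d2 < 2 * c"
    by simp
  have "sqrt (2 * (d1^2 + d2^2)) = sqrt (2^2 * ((d1^2 + d2^2) / 2))"
    by simp
  then show "sqrt (2 * (d1^2 + d2^2)) = 2 * c"
    unfolding c_def by (simp only: real_sqrt_mult) simp
qed

lemma scaled_centered_dens_crossings:
  fixes a d c \<delta> s0 :: real
  assumes a: "0 < a" "a \<le> 1 / 2" and c: "0 < c" "c < d" and \<delta>: "0 < \<delta>"
    and s0: "0 < s0" "scaled_centered_dens a d (s0 - a * d) < gamma_dens (2 * a) ((s0 + \<delta>) / c) / c"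
  shows "\<exists>s1 s2. 0 < s1 \<and> s1 < s2
    \<and> (\<forall>s \<in> {0<..<s1} \<union> {s2<..}.
         gamma_dens (2 * a) ((s + \<delta>) / c) / c < scaled_centered_dens a d (s - a * d))
    \<and> (\<forall>s \<in> {s1<..<s2}. scaled_centered_dens a d (s - a * d) < gamma_dens (2 * a) ((s + \<delta>) / c) / c)"
proof -
  define W where "W = c powr (2 * a) * Gamma (2 * a)"
  have W: "0 < W" using a c by (simp add: W_def)
  define C where "C = d powr a * Gamma a"
  have C: "0 < C" using a c by (simp add: C_def)
  define G where "G s = s powr (- a) * exp (- (s / d)) / C" for s
  show ?thesis
  proof (rule gamma_dens_crossings[where G = G])
    show "scaled_centered_dens a d (s - a * d) = s powr (2 * a - 1) * G s" if "0 < s" for s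
      using that a c by (simp add: scaled_centered_dens_shifted G_def C_def)
    show "0 < G s" if "0 < s" for s
      using that C by (simp add: G_def)
    have "convex_on {0<..} (\<lambda>s. - (s / d) - ln C)"
      by (rule convex_on_realI[where f' = "\<lambda>_. - 1 / d"]) (use c in \<open>auto intro!: derivative_eq_intros\<close>)
    then have "convex_on {0<..} (\<lambda>s. a * - ln s + (- (s / d) - ln C))"
      using a ln_concave by (intro convex_on_add convex_on_cmul) (auto simp: concave_on_def)
    moreover have "a * - ln s + (- (s / d) - ln C) = ln (G s)" if "s \<in> {0<..}" for s
      using that C by (simp add: G_def ln_mult ln_div ln_powr)
    ultimately show "convex_on {0<..} (\<lambda>s. ln (G s))"
      by (rule convex_on_cong[THEN iffD1, rotated])
    show "\<forall>\<^sub>F s in at_right 0. exp (- ((s + \<delta>) / c)) / (c powr (2 * a) * Gamma (2 * a)) < G s"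
      using W C a c unfolding G_def W_def[symmetric] by real_asymp
    show "\<forall>\<^sub>F s in at_top. exp (- ((s + \<delta>) / c)) / (c powr (2 * a) * Gamma (2 * a)) < G s"
      using W C a c unfolding G_def W_def[symmetric] by real_asymp
  qed (use a c \<delta> s0 in auto)
qed

lemma gamma_lincomb_dens_crossings:
  fixes a d1 d2 c \<delta> s0 :: real
  assumes a: "0 < a" "a \<le> 1 / 2" and d: "0 < d1" "d1 < d2"
    and c: "0 < c" "c < d2" "d1 * d2 \<le> c ^ 2" and \<delta>: "0 < \<delta>"
    and s0: "0 < s0" "gamma_lincomb_dens a d1 d2 s0 < gamma_dens (2 * a) ((s0 + \<delta>) / c) / c"
  shows "\<exists>s1 s2. 0 < s1 \<and> s1 < s2
    \<and> (\<forall>s \<in> {0<..<s1} \<union> {s2<..}. gamma_dens (2 * a) ((s + \<delta>) / c) / c < gamma_lincomb_dens a d1 d2 s)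
    \<and> (\<forall>s \<in> {s1<..<s2}. gamma_lincomb_dens a d1 d2 s < gamma_dens (2 * a) ((s + \<delta>) / c) / c)"
proof -
  define C where "C = (d1 * d2) powr a * Gamma a ^ 2"
  have C: "0 < C"
    unfolding C_def using a d Gamma_real_pos[OF a(1)] by (intro mult_pos_pos zero_less_power) auto
  show ?thesis
  proof (rule gamma_dens_crossings[where G = "\<lambda>s. beta_laplace a d1 d2 s / C"])
    show "gamma_lincomb_dens a d1 d2 s = s powr (2 * a - 1) * (beta_laplace a d1 d2 s / C)" if "0 < s" for s
      using that by (simp add: gamma_lincomb_dens_def C_def)
    show "0 < beta_laplace a d1 d2 s / C" if "0 < s" for s
      using that a d C by (simp add: beta_laplace_pos)
    have "convex_on {0<..} (\<lambda>s. ln (beta_laplace a d1 d2 s) + - ln C)"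
      using a d by (intro convex_on_add log_convex_beta_laplace) (auto simp: convex_on_const)
    moreover have "ln (beta_laplace a d1 d2 s) + - ln C = ln (beta_laplace a d1 d2 s / C)"
      if "s \<in> {0<..}" for s
      using that a d C beta_laplace_pos[of a d1 d2 s] by (simp add: ln_div)
    ultimately show "convex_on {0<..} (\<lambda>s. ln (beta_laplace a d1 d2 s / C))"
      by (rule convex_on_cong[THEN iffD1, rotated])
    show "\<forall>\<^sub>F s in at_right 0. exp (- ((s + \<delta>) / c)) / (c powr (2 * a) * Gamma (2 * a))
        < beta_laplace a d1 d2 s / C"
      unfolding C_def using a d c \<delta> by (intro beta_laplace_dominates_at_0) auto
    show "\<forall>\<^sub>F s in at_top. exp (- ((s + \<delta>) / c)) / (c powr (2 * a) * Gamma (2 * a))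
        < beta_laplace a d1 d2 s / C"
      unfolding C_def using a d c by (intro beta_laplace_dominates_at_top) auto
  qed (use a c \<delta> s0 in auto)
qed

lemma shifted_lincomb_dens_crossings:
  fixes a d1 d2 c \<delta> s0 :: real
  assumes a: "0 < a" "a \<le> 1 / 2" and d: "0 \<le> d1" "d1 < d2"
    and c: "0 < c" "c < d2" "d1 * d2 \<le> c ^ 2" and \<delta>: "0 < \<delta>"
    and s0: "0 < s0" "lincomb_dens a d1 d2 (s0 - a * (d1 + d2)) < gamma_dens (2 * a) ((s0 + \<delta>) / c) / c"
  shows "\<exists>s1 s2. 0 < s1 \<and> s1 < s2
    \<and> (\<forall>s \<in> {0<..<s1} \<union> {s2<..}.
         gamma_dens (2 * a) ((s + \<delta>) / c) / c < lincomb_dens a d1 d2 (s - a * (d1 + d2)))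
    \<and> (\<forall>s \<in> {s1<..<s2}.
         lincomb_dens a d1 d2 (s - a * (d1 + d2)) < gamma_dens (2 * a) ((s + \<delta>) / c) / c)"
proof (cases "d1 = 0")
  case True
  then show ?thesis
    using scaled_centered_dens_crossings[OF a c(1,2) \<delta> s0(1)] s0(2) by (simp add: lincomb_dens_def)
next
  case False
  then have "0 < d1" using d by simp
  then show ?thesis
    using gamma_lincomb_dens_crossings[OF a _ d(2) c \<delta> s0(1)] s0(2) a d
    by (simp add: lincomb_dens_eq_gamma_lincomb_dens)
qed

lemma lincomb_dens_crossings:
  assumes a: "0 < a" "a \<le> 1 / 2" and d: "0 \<le> d1" "d1 < d2"
  defines "c \<equiv> sqrt ((d1^2 + d2^2) / 2)"
  shows "\<exists>x0 x1 x2. x0 < x1 \<and> x1 < x2 \<and> x0 = - a * (d1 + d2) \<and>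
     (\<forall>x \<in> {- a * sqrt (2 * (d1^2 + d2^2)) <..< x0} \<union> {x1 <..< x2}.
        lincomb_dens a c c x - lincomb_dens a d1 d2 x > 0) \<and>
     (\<forall>x \<in> {x0 <..< x1} \<union> {x2 <..}. lincomb_dens a c c x - lincomb_dens a d1 d2 x < 0)"
proof -
  note c = sqrt_mean_square_bounds[OF d, folded c_def]
  define x0 where "x0 = - a * (d1 + d2)"
  define \<delta> where "\<delta> = 2 * a * c + x0"
  have "a * (d1 + d2) < a * (2 * c)"
    using a c(4) by simp
  then have \<delta>: "0 < \<delta>"
    by (simp add: \<delta>_def x0_def)
  have fV: "lincomb_dens a c c x = gamma_dens (2 * a) ((x - x0 + \<delta>) / c) / c" for x
  proof -
    have "x / c + 2 * a = (x - x0 + \<delta>) / c"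
      using c(1) by (simp add: \<delta>_def field_simps)
    then show ?thesis
      using a c(1) by (simp add: lincomb_dens_same_scale scaled_centered_dens_def)
  qed
  have fU: "lincomb_dens a d1 d2 x = lincomb_dens a d1 d2 ((x - x0) - a * (d1 + d2))" for x
    by (simp add: x0_def)
  obtain x where "x0 < x" "lincomb_dens a d1 d2 x < lincomb_dens a c c x"
    using lincomb_dens_same_scale_exceeds[of a d1 d2 c] a d c by (auto simp: x0_def)
  then obtain s1 s2 where s12: "0 < s1" "s1 < s2"
    and pos: "\<forall>s \<in> {0<..<s1} \<union> {s2<..}.
      gamma_dens (2 * a) ((s + \<delta>) / c) / c < lincomb_dens a d1 d2 (s - a * (d1 + d2))"
    and neg: "\<forall>s \<in> {s1<..<s2}.
      lincomb_dens a d1 d2 (s - a * (d1 + d2)) < gamma_dens (2 * a) ((s + \<delta>) / c) / c"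
    using shifted_lincomb_dens_crossings[of a d1 d2 c \<delta> "x - x0"] a d c \<delta>
    by (metis fU fV diff_gt_0_iff_gt)
  have below: "lincomb_dens a d1 d2 x < lincomb_dens a c c x"
    if "- a * sqrt (2 * (d1^2 + d2^2)) < x" "x < x0" for x
    using that a d c scaled_centered_dens_pos_iff[of "2 * a" c x]
    by (simp add: lincomb_dens_eq_0 lincomb_dens_same_scale x0_def)
  show ?thesis
  proof (intro exI conjI ballI)
    show "x0 < x0 + s1" "x0 + s1 < x0 + s2" "x0 = - a * (d1 + d2)"
      using s12 by (simp_all add: x0_def)
  next
    fix x assume "x \<in> {- a * sqrt (2 * (d1^2 + d2^2)) <..< x0} \<union> {x0 + s1 <..< x0 + s2}"
    then consider "- a * sqrt (2 * (d1^2 + d2^2)) < x" "x < x0" | "s1 < x - x0" "x - x0 < s2"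
      by auto
    then show "lincomb_dens a c c x - lincomb_dens a d1 d2 x > 0"
    proof cases
      case 1
      then show ?thesis using below by simp
    next
      case 2
      then show ?thesis using neg fU[of x] fV[of x] by simp
    qed
  next
    fix x assume "x \<in> {x0 <..< x0 + s1} \<union> {x0 + s2 <..}"
    then show "lincomb_dens a c c x - lincomb_dens a d1 d2 x < 0"
      using pos[rule_format, of "x - x0"] fU[of x] fV[of x] s12 by auto
  qed
qed

theorem lemma14:
  fixes \<alpha> d1 d2 :: real
  assumes "0 < \<alpha>" "\<alpha> \<le> 1/2" "0 \<le> d1" "0 \<le> d2" "d1 \<noteq> d2"
  defines "c \<equiv> sqrt ((d1^2 + d2^2) / 2)"
  defines "fU \<equiv> lincomb_dens \<alpha> d1 d2"
      and "fV \<equiv> lincomb_dens \<alpha> c c"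
  shows "\<exists>x0 x1 x2. x0 < x1 \<and> x1 < x2 \<and> x0 = - \<alpha> * (d1 + d2) \<and>
     (\<forall>x \<in> {- \<alpha> * sqrt (2 * (d1^2 + d2^2)) <..< x0} \<union> {x1 <..< x2}. fV x - fU x > 0) \<and>
     (\<forall>x \<in> {x0 <..< x1} \<union> {x2 <..}. fV x - fU x < 0)"
proof (cases "d1 < d2")
  case True
  then show ?thesis
    using lincomb_dens_crossings[OF assms(1-3)] unfolding fU_def fV_def c_def by blast
next
  case False
  then have "d2 < d1"
    using assms(5) by simp
  from lincomb_dens_crossings[OF assms(1,2,4) this] show ?thesis
    unfolding fU_def fV_def c_def lincomb_dens_commute[of \<alpha> d2 d1] by (simp add: add.commute)
qed

end
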